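(* Let $\epsilon_1,\dots,\epsilon_n$ ($n\ge3$) be directed edges of $\vec\Gamma$ forming a loop, i.e. $t(\epsilon_k)=s(\epsilon_{k+1})$ for $1\le k<n$ and $t(\epsilon_n)=s(\epsilon_1)$. Then $$\mathrm{Tr}(X_{\epsilon_1}\cdots X_{\epsilon_n})=\frac{1}{\sqrt{\mu(s(\epsilon_n))\mu(t(\epsilon_n))}}\sum_{\substack{1\le j\le n-1,\ \epsilon_j=\epsilon_n^{op}\\ j\notin\{1,n-1\}}}\mathrm{Tr}(X_{\epsilon_1}\cdots X_{\epsilon_{j-1}})\,\mathrm{Tr}(X_{\epsilon_{j+1}}\cdots X_{\epsilon_{n-1}})$$ $$+\ \delta_{\epsilon_{n-1},\epsilon_n^{op}}\sqrt{\tfrac{\mu(s(\epsilon_n))}{\mu(t(\epsilon_n))}}\,\mathrm{Tr}(X_{\epsilon_1}\cdots X_{\epsilon_{n-2}})+\delta_{\epsilon_1,\epsilon_n^{op}}\sqrt{\tfrac{\mu(t(\epsilon_n))}{\mu(s(\epsilon_n))}}\,\mathrm{Tr}(X_{\epsilon_2}\cdots X_{\epsilon_{n-1}}).$$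
   Context: $\Gamma$ is a countable, connected, undirected, locally finite graph (loops and multiple edges allowed) with vertex set $V$, edge set $E$, weighting $\mu:V\to(0,\infty)$. The directed version $\vec\Gamma$ has vertices $V$; each edge $e$ with distinct endpoints $\alpha\neq\beta$ yields directed edges $\epsilon,\epsilon^{op}$ with $s(\epsilon)=t(\epsilon^{op})=\alpha$, $t(\epsilon)=s(\epsilon^{op})=\beta$; each loop $e$ at $\gamma$ yields one directed loop $\epsilon=\epsilon^{op}$. Let $\mathcal C=C_0(V)$ with $p_\alpha$ the indicator of $\alpha$; $\mathcal X$ the Hilbert $\mathcal C$-$\mathcal C$ bimodule spanned by directed edges with $p_\alpha\epsilon=\delta_{s(\epsilon),\alpha}\epsilon$, $\epsilon p_\alpha=\delta_{t(\epsilon),\alpha}\epsilon$, $\langle\epsilon'|\epsilon\rangle=\delta_{\epsilon,\epsilon'}p_{t(\epsilon)}$; $\mathcal F(\mathcal X)=\mathcal C\oplus\bigoplus_{n\ge1}\mathcal X^{\otimes_{\mathcal C}n}$ with creation operators $\ell(\xi)$. For a loop $e$: $X_e=\ell(\epsilon)+\ell(\epsilon)^*$; for $e$ with endpoints $\alpha\ne\beta$: $a_\epsilon=(\mu(\alpha)/\mu(\beta))^{1/4}$, $X_e=a_\epsilon\ell(\epsilon)+a_\epsilon^{-1}\ell(\epsilon^{op})^*+a_\epsilon^{-1}\ell(\epsilon^{op})+a_\epsilon\ell(\epsilon)^*$. For a directed edge $\epsilon$ arising from $e$, $X_\epsilon=p_{s(\epsilon)}X_ep_{t(\epsilon)}$.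 $\mathrm{Tr}=\mathrm{tr}\circ E$, where $E(x)=PxP$ with $P$ the projection of $\mathcal F(\mathcal X)$ onto $\mathcal C$ and $\mathrm{tr}(p_v)=\mu(v)$. Empty products $X_{\epsilon_i}\cdots X_{\epsilon_j}$ (if any arise) are interpreted as the appropriate vertex projection. *)

theory Defs
  imports "HOL-Analysis.Analysis"
begin

text \<open>Undirected multigraph: edge type 'e, vertex type 'v (V = UNIV), each edge has
  one (loop) or two endpoints given by ends.\<close>

definition multigraph :: "('e \<Rightarrow> 'v set) \<Rightarrow> bool" where
  "multigraph ends \<longleftrightarrow> (\<forall>e. \<exists>\<alpha> \<beta>. ends e = {\<alpha>, \<beta>})"

definition locally_finite_graph :: "('e \<Rightarrow> 'v set) \<Rightarrow> bool" where
  "locally_finite_graph ends \<longleftrightarrow> (\<forall>v. finite {e. v \<in> ends e})"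

definition graph_connected :: "('e \<Rightarrow> 'v set) \<Rightarrow> bool" where
  "graph_connected ends \<longleftrightarrow>
     (\<forall>u v. (u, v) \<in> {(a, b). \<exists>e. ends e = {a, b}}\<^sup>*)"

text \<open>Directed edges: a pair (e, alpha) with alpha an endpoint of e, oriented out of alpha.
  A loop gives exactly one directed edge.\<close>

definition is_dedge :: "('e \<Rightarrow> 'v set) \<Rightarrow> 'e \<times> 'v \<Rightarrow> bool" where
  "is_dedge ends d \<longleftrightarrow> snd d \<in> ends (fst d)"

definition src :: "'e \<times> 'v \<Rightarrow> 'v" where
  "src d = snd d"

definition tgt :: "('e \<Rightarrow> 'v set) \<Rightarrow> 'e \<times> 'v \<Rightarrow> 'v" where
  "tgt ends d = (SOME \<beta>. ends (fst d) = {snd d, \<beta>})"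

definition opp :: "('e \<Rightarrow> 'v set) \<Rightarrow> 'e \<times> 'v \<Rightarrow> 'e \<times> 'v" where
  "opp ends d = (fst d, tgt ends d)"

text \<open>Algebraic Fock space: basis elements (v, w), where (v, []) is p_v in C and
  (v, d1 # ... # dk) is the elementary tensor d1 (x) ... (x) dk (a path starting at v).\<close>

type_synonym ('v, 'e) fvec = "('v \<times> ('e \<times> 'v) list) \<Rightarrow> real"
type_synonym ('v, 'e) fop = "('v, 'e) fvec \<Rightarrow> ('v, 'e) fvec"

text \<open>Creation operator l(d): xi \<mapsto> d (x) xi.\<close>
definition create :: "('e \<Rightarrow> 'v set) \<Rightarrow> 'e \<times> 'v \<Rightarrow> ('v, 'e) fop" where
  "create ends d x = (\<lambda>(v, w). case w of [] \<Rightarrow> 0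
      | d' # w' \<Rightarrow> (if d' = d \<and> v = src d then x (tgt ends d, w') else 0))"

text \<open>Annihilation operator l(d)^*: d' (x) xi \<mapsto> <d|d'> xi, and C \<mapsto> 0.\<close>
definition annih :: "('e \<Rightarrow> 'v set) \<Rightarrow> 'e \<times> 'v \<Rightarrow> ('v, 'e) fop" where
  "annih ends d x = (\<lambda>(v, w). if v = tgt ends d then x (src d, d # w) else 0)"

definition proj :: "'v \<Rightarrow> ('v, 'e) fop" where
  "proj \<alpha> x = (\<lambda>(v, w). if v = \<alpha> then x (v, w) else 0)"

definition coef_a :: "('e \<Rightarrow> 'v set) \<Rightarrow> ('v \<Rightarrow> real) \<Rightarrow> 'e \<times> 'v \<Rightarrow> real" where
  "coef_a ends mu d = (mu (src d) / mu (tgt ends d)) powr (1/4)"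

definition Xedge :: "('e \<Rightarrow> 'v set) \<Rightarrow> ('v \<Rightarrow> real) \<Rightarrow> 'e \<Rightarrow> ('v, 'e) fop" where
  "Xedge ends mu e x =
    (let d = (e, SOME \<alpha>. \<alpha> \<in> ends e); a = coef_a ends mu d in
     if src d = tgt ends d
     then (\<lambda>b. create ends d x b + annih ends d x b)
     else (\<lambda>b. a * create ends d x b + inverse a * annih ends (opp ends d) x b
              + inverse a * create ends (opp ends d) x b + a * annih ends d x b))"

definition Xdir :: "('e \<Rightarrow> 'v set) \<Rightarrow> ('v \<Rightarrow> real) \<Rightarrow> 'e \<times> 'v \<Rightarrow> ('v, 'e) fop" where
  "Xdir ends mu d = proj (src d) \<circ> Xedge ends mu (fst d) \<circ> proj (tgt ends d)"

text \<open>Product X_{d1} ... X_{dk} (empty product = identity; never used in the theorem).\<close>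
definition Xword :: "('e \<Rightarrow> 'v set) \<Rightarrow> ('v \<Rightarrow> real) \<Rightarrow> ('e \<times> 'v) list \<Rightarrow> ('v, 'e) fop" where
  "Xword ends mu ds = foldr (\<circ>) (map (Xdir ends mu) ds) id"

definition vac :: "'v \<Rightarrow> ('v, 'e) fvec" where
  "vac u = (\<lambda>b. if b = (u, []) then 1 else 0)"

text \<open>Tr = tr o E with E(x) = PxP, i.e. E(x) = sum_u <p_u, x p_u> p_u, tr(p_u) = mu u.\<close>
definition Tr :: "('v \<Rightarrow> real) \<Rightarrow> ('v, 'e) fop \<Rightarrow> real" where
  "Tr mu T = (\<Sum>\<^sub>\<infinity>u. mu u * T (vac u) (u, []))"

end

theory Submission
  imports Defs
begin

text \<open>Expanding each X_eps into creation and annihilation operators, the vacuum expectation of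
  X_eps1 ... X_epsn becomes a sum over the ways of building up and tearing down tensors. Acting
  first on the vacuum, X_epsn can only create eps_n (weight a_epsn). This factor stays at the bottom of
  the tensor until a unique later letter eps_j annihilates it; that letter must be eps_n^op, and it
  contributes a_epsn again. Cutting the word at j factors the amplitude into the vacuum amplitudes
  of the loops eps_1 ... eps_(j-1) at t(eps_n) and eps_(j+1) ... eps_(n-1) at s(eps_n). The weight
  a_epsn^2 = sqrt(mu(s)/mu(t)) together with the vertex weights in Tr gives the constants; for j = 1
  and j = n - 1 one of the two loops is empty, which gives the two boundary terms.\<close>

lemma ends_eq_src_tgt:
  assumes "multigraph ends" and "is_dedge ends d"
  shows "ends (fst d) = {src d, tgt ends d}"
proof -
  obtain a b where "ends (fst d) = {a, b}"
    using assms(1) unfolding multigraph_def by blast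
  with assms(2) have "\<exists>\<beta>. ends (fst d) = {snd d, \<beta>}"
    by (auto simp: is_dedge_def)
  then show ?thesis
    unfolding tgt_def src_def by (rule someI_ex)
qed

lemma tgt_eqI:
  assumes "multigraph ends" and "is_dedge ends d" and "ends (fst d) = {src d, b}"
  shows "tgt ends d = b"
proof -
  have "{src d, tgt ends d} = {src d, b}"
    using ends_eq_src_tgt[OF assms(1,2)] assms(3) by simp
  then show ?thesis
    by (auto simp: doubleton_eq_iff)
qed

lemma fst_opp [simp]: "fst (opp ends d) = fst d"
  by (simp add: opp_def)

lemma src_opp [simp]: "src (opp ends d) = tgt ends d"
  by (simp add: src_def opp_def)

lemma is_dedge_opp:
  assumes "multigraph ends" and "is_dedge ends d"
  shows "is_dedge ends (opp ends d)"
  using ends_eq_src_tgt[OF assms] by (simp add: is_dedge_def opp_def)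

lemma tgt_opp:
  assumes "multigraph ends" and "is_dedge ends d"
  shows "tgt ends (opp ends d) = src d"
proof (rule tgt_eqI[OF assms(1) is_dedge_opp[OF assms]])
  show "ends (fst (opp ends d)) = {src (opp ends d), src d}"
    using ends_eq_src_tgt[OF assms] by (simp add: insert_commute)
qed

lemma opp_opp:
  assumes "multigraph ends" and "is_dedge ends d"
  shows "opp ends (opp ends d) = d"
  using tgt_opp[OF assms] by (simp add: opp_def src_def)

lemma dedge_eq_or_opp:
  assumes "multigraph ends" and "is_dedge ends d" and "is_dedge ends d'" and "fst d' = fst d"
  shows "d = d' \<or> d = opp ends d'"
proof -
  have "snd d \<in> {src d', tgt ends d'}"
    using assms ends_eq_src_tgt[OF assms(1,3)] by (simp add: is_dedge_def)
  then show ?thesis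
    using assms(4) by (auto simp: opp_def src_def prod_eq_iff)
qed

lemma opp_eq_self_iff: "opp ends d = d \<longleftrightarrow> src d = tgt ends d"
  by (auto simp: opp_def src_def prod_eq_iff)

lemma coef_a_opp:
  assumes "multigraph ends" and "is_dedge ends d" and "\<forall>v. mu v > 0"
  shows "coef_a ends mu (opp ends d) = inverse (coef_a ends mu d)"
  using assms by (simp add: coef_a_def tgt_opp powr_divide less_imp_le)

lemma coef_a_mult_self:
  assumes "\<forall>v. mu v > 0"
  shows "coef_a ends mu d * coef_a ends mu d = sqrt (mu (src d) / mu (tgt ends d))"
proof -
  have "coef_a ends mu d * coef_a ends mu d = (mu (src d) / mu (tgt ends d)) powr (1/4 + 1/4)"
    unfolding coef_a_def by (rule powr_add[symmetric])
  also have "\<dots> = sqrt (mu (src d) / mu (tgt ends d))"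
    using assms[rule_format, of "src d"] assms[rule_format, of "tgt ends d"]
    by (simp add: powr_half_sqrt[symmetric])
  finally show ?thesis .
qed

definition Xedge_oriented :: "('e \<Rightarrow> 'v set) \<Rightarrow> ('v \<Rightarrow> real) \<Rightarrow> 'e \<times> 'v \<Rightarrow> ('v, 'e) fop" where
  "Xedge_oriented ends mu d x = (if src d = tgt ends d
     then (\<lambda>b. create ends d x b + annih ends d x b)
     else (\<lambda>b. coef_a ends mu d * create ends d x b
       + inverse (coef_a ends mu d) * annih ends (opp ends d) x b
       + inverse (coef_a ends mu d) * create ends (opp ends d) x b
       + coef_a ends mu d * annih ends d x b))"

lemma Xedge_oriented_opp:
  assumes "multigraph ends" and "is_dedge ends d" and "\<forall>v. mu v > 0"
  shows "Xedge_oriented ends mu (opp ends d) = Xedge_oriented ends mu d"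
proof (cases "src d = tgt ends d")
  case True
  then show ?thesis
    by (simp add: opp_eq_self_iff[THEN iffD2])
next
  case False
  then show ?thesis
    by (auto simp: Xedge_oriented_def tgt_opp[OF assms(1,2)] opp_opp[OF assms(1,2)]
        coef_a_opp[OF assms] algebra_simps)
qed

text \<open>Xedge chooses an orientation of the edge by Hilbert choice; by the symmetry above,
  any orientation gives the same operator.\<close>

lemma Xedge_eq_oriented:
  assumes "multigraph ends" and "is_dedge ends d" and "\<forall>v. mu v > 0"
  shows "Xedge ends mu (fst d) = Xedge_oriented ends mu d"
proof -
  define d0 where "d0 = (fst d, SOME \<alpha>. \<alpha> \<in> ends (fst d))"
  have "snd d \<in> ends (fst d)"
    using assms(2) by (simp add: is_dedge_def)
  then have d0: "is_dedge ends d0"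
    unfolding d0_def is_dedge_def by (auto intro: someI)
  have "Xedge ends mu (fst d) = Xedge_oriented ends mu d0"
    by (intro ext) (simp only: Xedge_def Xedge_oriented_def d0_def Let_def)
  then show ?thesis
    using dedge_eq_or_opp[OF assms(1,2) d0] Xedge_oriented_opp[OF assms(1) d0 assms(3)]
    by (auto simp: d0_def)
qed

lemma create_proj_apply:
  "create ends d (proj u x) (v, w) = (case w of [] \<Rightarrow> 0
     | d' # w' \<Rightarrow> if d' = d \<and> v = src d \<and> tgt ends d = u then x (u, w') else 0)"
  by (auto simp: create_def proj_def split: list.split)

lemma annih_proj_apply:
  "annih ends d (proj u x) (v, w) = (if v = tgt ends d \<and> src d = u then x (u, d # w) else 0)"
  by (auto simp: annih_def proj_def)

lemma Xdir_apply:
  assumes "multigraph ends" and "is_dedge ends d" and "\<forall>v. mu v > 0"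
  shows "Xdir ends mu d x (v, w) = (if v = src d then
     coef_a ends mu d * (case w of [] \<Rightarrow> 0 | d' # w' \<Rightarrow> if d' = d then x (tgt ends d, w') else 0)
     + inverse (coef_a ends mu d) * x (tgt ends d, opp ends d # w) else 0)"
proof -
  have "Xdir ends mu d x (v, w) =
      (if v = src d then Xedge ends mu (fst d) (proj (tgt ends d) x) (v, w) else 0)"
    by (simp add: Xdir_def proj_def)
  moreover have "coef_a ends mu d = 1" "opp ends d = d" if "src d = tgt ends d"
    using that assms(3)[rule_format, of "tgt ends d"] by (simp_all add: opp_eq_self_iff coef_a_def)
  ultimately show ?thesis
    by (cases w) (simp_all add: Xedge_eq_oriented[OF assms] Xedge_oriented_def
        create_proj_apply annih_proj_apply tgt_opp[OF assms(1,2)])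
qed

text \<open>word_amp ends mu ds w f is the coefficient at (src (hd ds), w) of X_ds applied to the vector
  with coefficient f w' at (v, w'), v the end vertex of the path ds (Xword_apply); in this form the
  vertex bookkeeping disappears. vac_amp ds s is the resulting matrix coefficient between the vacuum
  and the tensor s.\<close>

fun word_amp :: "('e \<Rightarrow> 'v set) \<Rightarrow> ('v \<Rightarrow> real) \<Rightarrow> ('e \<times> 'v) list \<Rightarrow> ('e \<times> 'v) list
    \<Rightarrow> (('e \<times> 'v) list \<Rightarrow> real) \<Rightarrow> real" where
  "word_amp ends mu [] w f = f w"
| "word_amp ends mu (d # ds) w f =
     coef_a ends mu d * (case w of [] \<Rightarrow> 0 | d' # w' \<Rightarrow> if d' = d then word_amp ends mu ds w' f else 0)
     + inverse (coef_a ends mu d) * word_amp ends mu ds (opp ends d # w) f"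

lemma word_amp_append:
  "word_amp ends mu (xs @ ys) w f = word_amp ends mu xs w (\<lambda>w'. word_amp ends mu ys w' f)"
  by (induction xs arbitrary: w) (auto split: list.split)

lemma word_amp_linear:
  "word_amp ends mu xs w (\<lambda>w'. c * f w' + c' * g w') =
     c * word_amp ends mu xs w f + c' * word_amp ends mu xs w g"
  by (induction xs arbitrary: w) (auto split: list.split simp: algebra_simps)

definition vac_amp :: "('e \<Rightarrow> 'v set) \<Rightarrow> ('v \<Rightarrow> real) \<Rightarrow> ('e \<times> 'v) list \<Rightarrow> ('e \<times> 'v) list \<Rightarrow> real"
  where "vac_amp ends mu ds s = word_amp ends mu ds [] (\<lambda>w. if w = s then 1 else 0)"

lemma vac_amp_Nil [simp]: "vac_amp ends mu [] s = (if s = [] then 1 else 0)"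
  by (simp add: vac_amp_def)

lemma vac_amp_snoc:
  "vac_amp ends mu (ys @ [y]) t = coef_a ends mu y * vac_amp ends mu ys (y # t)
   + inverse (coef_a ends mu y) *
       (case t of [] \<Rightarrow> 0 | t0 # t' \<Rightarrow> if t0 = opp ends y then vac_amp ends mu ys t' else 0)"
proof -
  let ?a = "coef_a ends mu y"
  have "(\<lambda>w. word_amp ends mu [y] w (\<lambda>w. if w = t then 1 else 0)) =
     (\<lambda>w. ?a * (if w = y # t then 1 else 0) + inverse ?a *
        (case t of [] \<Rightarrow> 0 | t0 # t' \<Rightarrow> if t0 = opp ends y then (if w = t' then 1 else 0) else 0))"
    by (auto split: list.split)
  moreover have "word_amp ends mu ys []
      (\<lambda>w. case t of [] \<Rightarrow> 0 | t0 # t' \<Rightarrow> if t0 = opp ends y then (if w = t' then 1 else 0) else 0)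
    = (case t of [] \<Rightarrow> 0 | t0 # t' \<Rightarrow> if t0 = opp ends y then vac_amp ends mu ys t' else 0)"
    using word_amp_linear[of ends mu ys "[]" 0 "\<lambda>_. 0" 0 "\<lambda>_. 0"]
    by (cases t) (simp_all add: vac_amp_def)
  ultimately show ?thesis
    unfolding vac_amp_def word_amp_append by (simp add: word_amp_linear)
qed

text \<open>Splitting according to the letter xs ! j that annihilates the bottom tensor factor c.\<close>

lemma vac_amp_snoc_factor:
  "vac_amp ends mu xs (s @ [c]) = (\<Sum>j<length xs. if opp ends (xs ! j) = c then
      vac_amp ends mu (take j xs) [] * inverse (coef_a ends mu (xs ! j))
        * vac_amp ends mu (drop (Suc j) xs) s else 0)"
proof (induction xs arbitrary: s rule: rev_induct)
  case Nil
  then show ?case by simp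
next
  case (snoc y ys)
  let ?a = "coef_a ends mu y"
  define F where "F s j = (if opp ends (ys ! j) = c then vac_amp ends mu (take j ys) []
      * inverse (coef_a ends mu (ys ! j)) * vac_amp ends mu (drop (Suc j) ys) s else 0)" for s j
  have IH: "vac_amp ends mu ys (s @ [c]) = (\<Sum>j<length ys. F s j)" for s
    using snoc.IH by (simp add: F_def)
  have "(\<Sum>j<length (ys @ [y]). if opp ends ((ys @ [y]) ! j) = c then
      vac_amp ends mu (take j (ys @ [y])) [] * inverse (coef_a ends mu ((ys @ [y]) ! j))
        * vac_amp ends mu (drop (Suc j) (ys @ [y])) s else 0)
     = (\<Sum>j<length ys. ?a * F (y # s) j
          + inverse ?a * (case s of [] \<Rightarrow> 0 | t0 # t' \<Rightarrow> if t0 = opp ends y then F t' j else 0))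
       + (if opp ends y = c \<and> s = [] then vac_amp ends mu ys [] * inverse ?a else 0)"
    unfolding length_append_singleton sum.lessThan_Suc
    by (intro arg_cong2[where f = "(+)"] sum.cong)
      (auto simp: nth_append F_def vac_amp_snoc algebra_simps split: list.split)
  also have "\<dots> = ?a * vac_amp ends mu ys ((y # s) @ [c])
       + inverse ?a * (case s of [] \<Rightarrow> 0 | t0 # t' \<Rightarrow> if t0 = opp ends y then vac_amp ends mu ys (t' @ [c]) else 0)
       + (if opp ends y = c \<and> s = [] then vac_amp ends mu ys [] * inverse ?a else 0)"
    by (cases s) (simp_all only: IH, simp_all add: sum.distrib sum_distrib_left)
  also have "\<dots> = vac_amp ends mu (ys @ [y]) (s @ [c])"
    by (cases s) (auto simp: vac_amp_snoc)
  finally show ?case by simp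
qed

lemma vac_amp_snoc_closing:
  assumes mg: "multigraph ends" and mu: "\<forall>v. mu v > 0"
    and dedges: "\<forall>d\<in>set xs. is_dedge ends d" and c: "is_dedge ends c"
  shows "vac_amp ends mu (xs @ [c]) [] = sqrt (mu (src c) / mu (tgt ends c)) *
    (\<Sum>j | j < length xs \<and> xs ! j = opp ends c.
       vac_amp ends mu (take j xs) [] * vac_amp ends mu (drop (Suc j) xs) [])"
proof -
  let ?a = "coef_a ends mu c"
  have summand: "(if opp ends (xs ! j) = c then vac_amp ends mu (take j xs) []
        * inverse (coef_a ends mu (xs ! j)) * vac_amp ends mu (drop (Suc j) xs) [] else 0)
      = ?a * (if xs ! j = opp ends c then vac_amp ends mu (take j xs) []
        * vac_amp ends mu (drop (Suc j) xs) [] else 0)" if "j < length xs" for j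
  proof -
    have "is_dedge ends (xs ! j)"
      using dedges that by simp
    then have "opp ends (xs ! j) = c \<longleftrightarrow> xs ! j = opp ends c"
      using opp_opp[OF mg] c by metis
    then show ?thesis
      by (auto simp: coef_a_opp[OF mg c mu])
  qed
  have "vac_amp ends mu (xs @ [c]) [] = ?a * vac_amp ends mu xs ([] @ [c])"
    by (simp add: vac_amp_snoc)
  also have "\<dots> = ?a * ?a * (\<Sum>j | j < length xs \<and> xs ! j = opp ends c.
       vac_amp ends mu (take j xs) [] * vac_amp ends mu (drop (Suc j) xs) [])"
    unfolding vac_amp_snoc_factor
    by (simp add: summand sum_distrib_left[symmetric] sum.inter_filter[symmetric] lessThan_def
        conj_commute)
  finally show ?thesis
    by (simp add: coef_a_mult_self[OF mu])
qed

definition is_dpath :: "('e \<Rightarrow> 'v set) \<Rightarrow> ('e \<times> 'v) list \<Rightarrow> bool" where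
  "is_dpath ends ds \<longleftrightarrow>
     (\<forall>d\<in>set ds. is_dedge ends d) \<and> successively (\<lambda>d d'. tgt ends d = src d') ds"

lemma is_dpath_Cons:
  "is_dpath ends (d # ds) \<longleftrightarrow>
     is_dedge ends d \<and> is_dpath ends ds \<and> (ds = [] \<or> tgt ends d = src (hd ds))"
  by (auto simp: is_dpath_def successively_Cons)

lemma is_dpath_append:
  "is_dpath ends (xs @ ys) \<longleftrightarrow> is_dpath ends xs \<and> is_dpath ends ys
     \<and> (xs = [] \<or> ys = [] \<or> tgt ends (last xs) = src (hd ys))"
  by (auto simp: is_dpath_def successively_append_iff)

lemma is_dpath_map_upt:
  assumes "\<forall>k\<in>{m..<n}. is_dedge ends (eps k)"
    and "\<forall>k\<in>{m..<n - 1}. tgt ends (eps k) = src (eps (Suc k))"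
  shows "is_dpath ends (map eps [m..<n])"
  unfolding is_dpath_def successively_map successively_conv_nth
  using assms by (auto simp del: upt_Suc)

lemma Xword_Cons: "Xword ends mu (d # ds) = Xdir ends mu d \<circ> Xword ends mu ds"
  by (simp add: Xword_def)

lemma Xword_apply:
  assumes mg: "multigraph ends" and mu: "\<forall>v. mu v > 0"
  shows "is_dpath ends ds \<Longrightarrow> ds \<noteq> [] \<Longrightarrow> Xword ends mu ds x (v, w) =
    (if v = src (hd ds) then word_amp ends mu ds w (\<lambda>w'. x (tgt ends (last ds), w')) else 0)"
proof (induction ds arbitrary: v w)
  case Nil
  then show ?case by simp
next
  case (Cons d ds)
  then have d: "is_dedge ends d"
    by (simp add: is_dpath_Cons)
  show ?case
  proof (cases "ds = []")
    case True
    then show ?thesis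
      by (simp add: Xword_Cons Xdir_apply[OF mg d mu] Xword_def split: list.split)
  next
    case False
    with Cons.prems have "tgt ends d = src (hd ds)" and "is_dpath ends ds"
      by (simp_all add: is_dpath_Cons)
    with False show ?thesis
      by (simp add: Xword_Cons Xdir_apply[OF mg d mu] Cons.IH split: list.split)
  qed
qed

lemma Tr_Xword_closed:
  assumes mg: "multigraph ends" and mu: "\<forall>v. mu v > 0"
    and "is_dpath ends ds" and "ds \<noteq> []" and "tgt ends (last ds) = src (hd ds)"
  shows "Tr mu (Xword ends mu ds) = mu (src (hd ds)) * vac_amp ends mu ds []"
proof -
  let ?s = "src (hd ds)"
  have "mu u * Xword ends mu ds (vac u) (u, []) =
      (if u = ?s then mu ?s * vac_amp ends mu ds [] else 0)" for u
    using Xword_apply[OF mg mu assms(3,4), of "vac u" u "[]"] assms(5)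
    by (simp add: vac_def vac_amp_def)
  then have "Tr mu (Xword ends mu ds) = (\<Sum>\<^sub>\<infinity>u. if u = ?s then mu ?s * vac_amp ends mu ds [] else 0)"
    by (simp add: Tr_def)
  also have "\<dots> = (\<Sum>\<^sub>\<infinity>u\<in>{?s}. mu ?s * vac_amp ends mu ds [])"
    by (rule infsum_cong_neutral) auto
  also have "\<dots> = mu ?s * vac_amp ends mu ds []"
    by simp
  finally show ?thesis .
qed

lemma sum_filter_lessThan_first_last:
  fixes f :: "nat \<Rightarrow> 'a::comm_monoid_add"
  assumes "2 \<le> m"
  shows "(\<Sum>j | j < m \<and> P j. f j) = (\<Sum>j | 0 < j \<and> j < m - 1 \<and> P j. f j)
    + (if P (m - 1) then f (m - 1) else 0) + (if P 0 then f 0 else 0)"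
proof -
  have "{..<m} = insert 0 (insert (m - 1) {0<..<m - 1})"
    using assms by auto
  then have "(\<Sum>j<m. if P j then f j else 0) = (\<Sum>j\<in>{0<..<m - 1}. if P j then f j else 0)
      + (if P (m - 1) then f (m - 1) else 0) + (if P 0 then f 0 else 0)"
    using assms by (simp add: add_ac)
  moreover have "{j. j < m \<and> P j} = {j\<in>{..<m}. P j}"
    and "{j. 0 < j \<and> j < m - 1 \<and> P j} = {j\<in>{0<..<m - 1}. P j}"
    by auto
  ultimately show ?thesis
    by (simp only: sum.inter_filter finite_lessThan finite_greaterThanLessThan)
qed

lemma mult_sqrt_divide:
  fixes x y :: real
  assumes "0 < y"
  shows "y * sqrt (x / y) = sqrt (x * y)"
proof -
  have "sqrt (x * y) = sqrt ((y * y) * (x / y))"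
    using assms by (simp add: field_simps)
  also have "\<dots> = sqrt (y * y) * sqrt (x / y)"
    by (rule real_sqrt_mult)
  also have "sqrt (y * y) = y"
    using assms by simp
  finally show ?thesis
    by simp
qed

lemma is_dpath_take_nth_drop:
  assumes "is_dpath ends xs" and "j < length xs"
  shows "is_dpath ends (take j xs)" and "is_dpath ends (drop (Suc j) xs)"
    and "0 < j \<Longrightarrow> tgt ends (last (take j xs)) = src (xs ! j)"
    and "Suc j < length xs \<Longrightarrow> src (hd (drop (Suc j) xs)) = tgt ends (xs ! j)"
proof -
  have "is_dpath ends (take j xs @ xs ! j # drop (Suc j) xs)"
    using assms(1) by (simp only: id_take_nth_drop[OF assms(2), symmetric])
  then show "is_dpath ends (take j xs)" "is_dpath ends (drop (Suc j) xs)"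
    "0 < j \<Longrightarrow> tgt ends (last (take j xs)) = src (xs ! j)"
    "Suc j < length xs \<Longrightarrow> src (hd (drop (Suc j) xs)) = tgt ends (xs ! j)"
    using assms(2) by (auto simp: is_dpath_append is_dpath_Cons)
qed

lemma Tr_Xword_take_closed:
  assumes mg: "multigraph ends" and mu: "\<forall>v. mu v > 0"
    and path: "is_dpath ends (xs @ [c])" and closed: "tgt ends c = src (hd xs)"
    and j: "0 < j" "j < length xs" "xs ! j = opp ends c"
  shows "Tr mu (Xword ends mu (take j xs)) = mu (tgt ends c) * vac_amp ends mu (take j xs) []"
proof -
  have xs: "is_dpath ends xs" and "is_dedge ends c"
    using path by (simp_all add: is_dpath_append is_dpath_Cons)
  then have "tgt ends (last (take j xs)) = src (hd (take j xs))"
    using is_dpath_take_nth_drop(3)[OF xs j(2,1)] closed j by (simp add: tgt_opp mg hd_conv_nth)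
  moreover have "take j xs \<noteq> []" and "hd (take j xs) = hd xs"
    using j by (auto simp: hd_conv_nth)
  ultimately show ?thesis
    using Tr_Xword_closed[OF mg mu is_dpath_take_nth_drop(1)[OF xs j(2)]] closed by simp
qed

lemma Tr_Xword_drop_closed:
  assumes mg: "multigraph ends" and mu: "\<forall>v. mu v > 0"
    and path: "is_dpath ends (xs @ [c])" and j: "Suc j < length xs" "xs ! j = opp ends c"
  shows "Tr mu (Xword ends mu (drop (Suc j) xs)) = mu (src c) * vac_amp ends mu (drop (Suc j) xs) []"
proof -
  have xs: "is_dpath ends xs" and "is_dedge ends c" and "tgt ends (last xs) = src c"
    using path j by (auto simp: is_dpath_append is_dpath_Cons)
  then have "src (hd (drop (Suc j) xs)) = src c"
    using is_dpath_take_nth_drop(4)[OF xs _ j(1)] j by (simp add: tgt_opp mg)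
  moreover have "drop (Suc j) xs \<noteq> []" and "last (drop (Suc j) xs) = last xs"
    using j by simp_all
  ultimately show ?thesis
    using Tr_Xword_closed[OF mg mu is_dpath_take_nth_drop(2)[OF xs]] \<open>tgt ends (last xs) = src c\<close>
    by simp
qed

lemma Tr_Xword_closed_snoc_vac_amp:
  assumes mg: "multigraph ends" and mu: "\<forall>v. mu v > 0"
    and path: "is_dpath ends (xs @ [c])" and closed: "tgt ends c = src (hd xs)" and "xs \<noteq> []"
  shows "Tr mu (Xword ends mu (xs @ [c])) = sqrt (mu (src c) * mu (tgt ends c)) *
    (\<Sum>j | j < length xs \<and> xs ! j = opp ends c.
       vac_amp ends mu (take j xs) [] * vac_amp ends mu (drop (Suc j) xs) [])"
proof -
  have "\<forall>d\<in>set xs. is_dedge ends d" and "is_dedge ends c"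
    using path by (simp_all add: is_dpath_def)
  note closing = vac_amp_snoc_closing[OF mg mu this]
  have "sqrt (mu (src c) / mu (tgt ends c)) * mu (tgt ends c) = sqrt (mu (src c) * mu (tgt ends c))"
    using mult_sqrt_divide mu by (simp add: mult.commute)
  then show ?thesis
    using Tr_Xword_closed[OF mg mu path] closed \<open>xs \<noteq> []\<close>
    by (simp add: closing mult_ac)
qed

lemma Tr_Xword_closed_snoc:
  assumes mg: "multigraph ends" and mu: "\<forall>v. mu v > 0"
    and path: "is_dpath ends (xs @ [c])" and closed: "tgt ends c = src (hd xs)"
    and len: "2 \<le> length xs"
  shows "Tr mu (Xword ends mu (xs @ [c])) =
      1 / sqrt (mu (src c) * mu (tgt ends c)) *
        (\<Sum>j | 0 < j \<and> j < length xs - 1 \<and> xs ! j = opp ends c.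
           Tr mu (Xword ends mu (take j xs)) * Tr mu (Xword ends mu (drop (Suc j) xs)))
    + (if last xs = opp ends c
       then sqrt (mu (src c) / mu (tgt ends c)) * Tr mu (Xword ends mu (butlast xs)) else 0)
    + (if hd xs = opp ends c
       then sqrt (mu (tgt ends c) / mu (src c)) * Tr mu (Xword ends mu (tl xs)) else 0)"
proof -
  define s t p where "s = src c" and "t = tgt ends c" and "p = opp ends c"
  define K where "K = sqrt (mu s * mu t)"
  let ?\<tau> = "\<lambda>ds. vac_amp ends mu ds []"
  have ne: "xs \<noteq> []"
    using len by auto
  note Tr_take = Tr_Xword_take_closed[OF mg mu path closed, folded t_def p_def]
  note Tr_drop = Tr_Xword_drop_closed[OF mg mu path, folded s_def p_def]
  have "mu s > 0" "mu t > 0"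
    using mu by auto
  then have K: "0 < K" "K * K = mu s * mu t"
      "sqrt (mu s / mu t) * mu t = K" "sqrt (mu t / mu s) * mu s = K"
    using mult_sqrt_divide[of "mu t"] mult_sqrt_divide[of "mu s"]
    by (simp_all add: K_def mult.commute)
  have "Tr mu (Xword ends mu (xs @ [c])) = K * (\<Sum>j | 0 < j \<and> j < length xs - 1 \<and> xs ! j = p.
        ?\<tau> (take j xs) * ?\<tau> (drop (Suc j) xs))
      + (if last xs = p then K * ?\<tau> (butlast xs) else 0) + (if hd xs = p then K * ?\<tau> (tl xs) else 0)"
    using Tr_Xword_closed_snoc_vac_amp[OF mg mu path closed ne] len ne
    by (simp add: sum_filter_lessThan_first_last distrib_left last_conv_nth hd_conv_nth
        butlast_conv_take drop_Suc s_def t_def p_def K_def)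
  also have "\<dots> = 1 / K * (\<Sum>j | 0 < j \<and> j < length xs - 1 \<and> xs ! j = p.
         Tr mu (Xword ends mu (take j xs)) * Tr mu (Xword ends mu (drop (Suc j) xs)))
      + (if last xs = p then sqrt (mu s / mu t) * Tr mu (Xword ends mu (butlast xs)) else 0)
      + (if hd xs = p then sqrt (mu t / mu s) * Tr mu (Xword ends mu (tl xs)) else 0)"
  proof -
    have "K * (?\<tau> (take j xs) * ?\<tau> (drop (Suc j) xs)) =
        1 / K * (Tr mu (Xword ends mu (take j xs)) * Tr mu (Xword ends mu (drop (Suc j) xs)))"
      if "j \<in> {j. 0 < j \<and> j < length xs - 1 \<and> xs ! j = p}" for j
    proof -
      have j: "0 < j" "j < length xs" "Suc j < length xs" "xs ! j = p"
        using that by auto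
      have "Tr mu (Xword ends mu (take j xs)) * Tr mu (Xword ends mu (drop (Suc j) xs))
          = K * K * (?\<tau> (take j xs) * ?\<tau> (drop (Suc j) xs))"
        using Tr_take[OF j(1,2,4)] Tr_drop[OF j(3,4)] K(2) by simp
      then show ?thesis
        using K(1) by simp
    qed
    moreover have "last xs = p \<Longrightarrow>
        K * ?\<tau> (butlast xs) = sqrt (mu s / mu t) * Tr mu (Xword ends mu (butlast xs))"
      using Tr_take[of "length xs - 1"] len K(3) by (simp add: last_conv_nth butlast_conv_take ne)
    moreover have "hd xs = p \<Longrightarrow>
        K * ?\<tau> (tl xs) = sqrt (mu t / mu s) * Tr mu (Xword ends mu (tl xs))"
      using Tr_drop[of 0] len K(4) by (simp add: hd_conv_nth ne drop_Suc)
    ultimately show ?thesis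
      by (simp add: sum_distrib_left)
  qed
  finally show ?thesis
    by (simp only: s_def t_def p_def K_def)
qed

theorem lemma2p6:
  fixes ends :: "'e \<Rightarrow> 'v set" and mu :: "'v \<Rightarrow> real"
    and eps :: "nat \<Rightarrow> 'e \<times> 'v" and n :: nat
  assumes "multigraph ends"
    and "countable (UNIV :: 'v set)" and "countable (UNIV :: 'e set)"
    and "locally_finite_graph ends" and "graph_connected ends"
    and "\<forall>v. mu v > 0"
    and "n \<ge> 3"
    and "\<forall>k\<in>{1..n}. is_dedge ends (eps k)"
    and "\<forall>k\<in>{1..<n}. tgt ends (eps k) = src (eps (Suc k))"
    and "tgt ends (eps n) = src (eps 1)"
  shows "Tr mu (Xword ends mu (map eps [1..<n+1])) =
      1 / sqrt (mu (src (eps n)) * mu (tgt ends (eps n))) *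
        (\<Sum>j\<in>{j. 1 \<le> j \<and> j \<le> n - 1 \<and> eps j = opp ends (eps n) \<and> j \<notin> {1, n - 1}}.
            Tr mu (Xword ends mu (map eps [1..<j])) * Tr mu (Xword ends mu (map eps [j+1..<n])))
    + (if eps (n - 1) = opp ends (eps n)
       then sqrt (mu (src (eps n)) / mu (tgt ends (eps n))) * Tr mu (Xword ends mu (map eps [1..<n-1]))
       else 0)
    + (if eps 1 = opp ends (eps n)
       then sqrt (mu (tgt ends (eps n)) / mu (src (eps n))) * Tr mu (Xword ends mu (map eps [2..<n]))
       else 0)"
proof -
  note n = assms(7)
  define xs where "xs = map eps [1..<n]"
  have word: "map eps [1..<n+1] = xs @ [eps n]"
    using n by (simp add: xs_def)
  have "is_dpath ends (map eps [1..<n+1])"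
    using assms(8,9) by (intro is_dpath_map_upt) auto
  then have path: "is_dpath ends (xs @ [eps n])"
    by (simp only: word)
  have "[1..<n] = [1..<n - 1] @ [n - 1]"
    using n upt_Suc[of 1 "n - 1"] by simp
  then have ends: "hd xs = eps 1" "last xs = eps (n - 1)" "butlast xs = map eps [1..<n - 1]"
      "length xs = n - 1"
    using n by (simp_all add: xs_def hd_map)
  have tl: "tl xs = map eps [2..<n]"
    by (simp add: xs_def map_tl[symmetric] numeral_2_eq_2)
  have mid: "(\<Sum>j\<in>{j. 1 \<le> j \<and> j \<le> n - 1 \<and> eps j = opp ends (eps n) \<and> j \<notin> {1, n - 1}}.
        Tr mu (Xword ends mu (map eps [1..<j])) * Tr mu (Xword ends mu (map eps [j+1..<n])))
      = (\<Sum>j | 0 < j \<and> j < length xs - 1 \<and> xs ! j = opp ends (eps n).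
        Tr mu (Xword ends mu (take j xs)) * Tr mu (Xword ends mu (drop (Suc j) xs)))"
    by (rule sum.reindex_bij_witness[of _ Suc "\<lambda>j. j - 1"]) (auto simp: xs_def take_map drop_map)
  show ?thesis
    using Tr_Xword_closed_snoc[OF assms(1,6) path] assms(10) n
    unfolding word ends tl mid by simp
qed

end
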